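(* Let $\rho_1,\rho_2$ be pure $n$-qubit states ($n\ge1$), $O$ a Hermitian operator, and $p\in[0,1)$. Let $\widetilde{\rho}_j=(1-p)\rho_j+p\,\mathbb{I}/2^n$ ($j=1,2$) be their images under global depolarizing noise, and assume $\mathrm{Tr}[\rho_1O]\ne\mathrm{Tr}[\rho_2O]$. For an integer $M\ge2$ consider the two Virtual Distillation estimators $$C_m^{(A)}(\widetilde{\rho})=\frac{\mathrm{Tr}[\widetilde{\rho}^MO]}{\mathrm{Tr}[\widetilde{\rho}^M]},\qquad C_m^{(B)}(\widetilde{\rho})=\frac{\mathrm{Tr}[\widetilde{\rho}^MO]}{\lambda^M},$$ where $\lambda$ is the largest eigenvalue of $\widetilde{\rho}$, with error mitigation costs $\gamma^{(B)}=\lambda^{-2M}$ and $\gamma^{(A)}\ge(\mathrm{Tr}[\widetilde{\rho}^M])^{-2}$. Let $\chi^{(A)},\chi^{(B)}$ be the corresponding relative resolvabilities of the two points. Then $$\chi^{(A)}\le\chi^{(B)}=\Gamma(n,M,p):=\frac{1}{(1-p)^2}\Big[\Big(1-p+\frac{p}{2^n}\Big)^M-\Big(\frac{p}{2^n}\Big)^M\Big]^2,$$ and $\Gamma(n,M,p)\le1$ for all $n\ge1$, $M\ge2$, $p\in[0,1)$; moreover $\Gamma$ is monotonically decreasing in $M$ (with asymptotically exponential decay) for $n\ge1$, $M\ge2$, and $\Gamma(1,2,p)=1$ for all $p$.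
   Context: The error mitigation cost $\gamma$ is the ratio of the variance of the mitigated estimate to the variance of the noisy estimate $\mathrm{Tr}[\widetilde{\rho}O]$; the stated values/bounds for $\gamma^{(A)},\gamma^{(B)}$ are the model used (they follow from estimating $\mathrm{Tr}[\widetilde\rho O]$, $\mathrm{Tr}[\widetilde\rho^M O]$, $\mathrm{Tr}[\widetilde\rho^M]$ via ancilla measurements whose statistical variances are state-independent, with the $M$-copy variance no smaller than the single-copy one). Note $\lambda$ and $\mathrm{Tr}[\widetilde\rho^M]$ are the same for $\widetilde\rho_1,\widetilde\rho_2$. The relative resolvability of the two points is $\chi=\frac{1}{\gamma}\Big(\frac{C_m(\widetilde{\rho}_1)-C_m(\widetilde{\rho}_2)}{\mathrm{Tr}[\widetilde{\rho}_1O]-\mathrm{Tr}[\widetilde{\rho}_2O]}\Big)^2$. *)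

theory Defs
  imports "Jordan_Normal_Form.Char_Poly" "HOL-Library.Landau_Symbols"
begin

definition pure_state :: "nat \<Rightarrow> complex mat \<Rightarrow> bool" where
  "pure_state n \<rho> \<longleftrightarrow> (\<exists>v. v \<in> carrier_vec (2^n) \<and>
      (\<Sum>i<2^n. cmod (v $ i) ^ 2) = 1 \<and>
      \<rho> = mat (2^n) (2^n) (\<lambda>(i,j). v $ i * cnj (v $ j)))"

definition hermitian_op :: "nat \<Rightarrow> complex mat \<Rightarrow> bool" where
  "hermitian_op n Ob \<longleftrightarrow> Ob \<in> carrier_mat (2^n) (2^n) \<and>
      (\<forall>i<2^n. \<forall>j<2^n. Ob $$ (i,j) = cnj (Ob $$ (j,i)))"

definition mtrace :: "complex mat \<Rightarrow> complex" where
  "mtrace A = (\<Sum>i<dim_row A. A $$ (i,i))"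

definition depolarize :: "nat \<Rightarrow> real \<Rightarrow> complex mat \<Rightarrow> complex mat" where
  "depolarize n p \<rho> = complex_of_real (1 - p) \<cdot>\<^sub>m \<rho> +
      complex_of_real (p / 2^n) \<cdot>\<^sub>m 1\<^sub>m (2^n)"

text \<open>Largest eigenvalue (eigenvalues of Hermitian matrices are real).\<close>
definition largest_eigenvalue :: "complex mat \<Rightarrow> real" where
  "largest_eigenvalue A = Max {Re k | k. eigenvalue A k}"

text \<open>Virtual distillation estimators (traces involved are real for Hermitian inputs).\<close>
definition C_A :: "nat \<Rightarrow> complex mat \<Rightarrow> complex mat \<Rightarrow> real" where
  "C_A M Ob \<rho> = Re (mtrace (\<rho> ^\<^sub>m M * Ob)) / Re (mtrace (\<rho> ^\<^sub>m M))"

definition C_B :: "nat \<Rightarrow> complex mat \<Rightarrow> complex mat \<Rightarrow> real" where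
  "C_B M Ob \<rho> = Re (mtrace (\<rho> ^\<^sub>m M * Ob)) / largest_eigenvalue \<rho> ^ M"

definition resolvability ::
  "real \<Rightarrow> (complex mat \<Rightarrow> real) \<Rightarrow> complex mat \<Rightarrow> complex mat \<Rightarrow> complex mat \<Rightarrow> real" where
  "resolvability \<gamma> C Ob r1 r2 = (1 / \<gamma>) *
     ((C r1 - C r2) / (Re (mtrace (r1 * Ob)) - Re (mtrace (r2 * Ob)))) ^ 2"

definition Gamma :: "nat \<Rightarrow> nat \<Rightarrow> real \<Rightarrow> real" where
  "Gamma n M p = 1 / (1 - p)^2 * ((1 - p + p / 2^n) ^ M - (p / 2^n) ^ M) ^ 2"

end

theory Submission
  imports Defs
begin

(* A pure state is an idempotent, so its depolarized image is (1 - p) rho + q I with q = p / 2^n,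
   and the M-th power of that matrix is (a^M - q^M) rho + q^M I, where a = 1 - p + q is its largest
   eigenvalue. Hence Tr[rho~^M O] is affine in Tr[rho O] with slope a^M - q^M, Tr[rho~ O] is affine
   with slope a - q = 1 - p, and Tr[rho~^M] = a^M - q^M + 2^n q^M is the same for both states.
   Both resolvabilities are therefore squared ratios of slopes: exactly Gamma for estimator B, and
   at most Gamma for A since its cost is at least Tr[rho~^M]^-2. Because a + q <= 1 (this is where
   n >= 1 enters), a^M - q^M is nonincreasing in M and starts from a - q = 1 - p, so Gamma <= 1,
   Gamma decreases in M, and Gamma ~ (1 - p)^-2 a^(2M). *)

lemma mtrace_add:
  "A \<in> carrier_mat N N \<Longrightarrow> B \<in> carrier_mat N N \<Longrightarrow> mtrace (A + B) = mtrace A + mtrace B"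
  by (simp add: mtrace_def sum.distrib)

lemma mtrace_smult: "A \<in> carrier_mat N N \<Longrightarrow> mtrace (c \<cdot>\<^sub>m A) = c * mtrace A"
  by (simp add: mtrace_def sum_distrib_left)

lemma mtrace_one: "mtrace (1\<^sub>m N) = of_nat N"
  by (simp add: mtrace_def)

lemma smult_mult_mat_vec:
  fixes A :: "'a::comm_ring_1 mat"
  assumes "A \<in> carrier_mat nr nc" and "w \<in> carrier_vec nc"
  shows "(c \<cdot>\<^sub>m A) *\<^sub>v w = c \<cdot>\<^sub>v (A *\<^sub>v w)"
  using assms by (intro eq_vecI) (auto simp: scalar_prod_def sum_distrib_left ac_simps)

lemma smult_vec_right_cancel:
  fixes w :: "'a::field vec"
  assumes "w \<in> carrier_vec N" and "w \<noteq> 0\<^sub>v N" and "a \<cdot>\<^sub>v w = b \<cdot>\<^sub>v w"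
  shows "a = b"
proof -
  obtain i where "i < N" and "w $ i \<noteq> 0"
    using assms(1,2) by (metis carrier_vecD eq_vecI index_zero_vec)
  moreover have "a * w $ i = b * w $ i"
    using assms(3) \<open>i < N\<close> assms(1) by (metis carrier_vecD index_smult_vec(1))
  ultimately show ?thesis by simp
qed

lemma idem_mult_smult_plus_smult_one:
  fixes P :: "'a::comm_ring_1 mat"
  assumes P: "P \<in> carrier_mat N N" and idem: "P * P = P"
  shows "P * (c1 \<cdot>\<^sub>m P + c2 \<cdot>\<^sub>m 1\<^sub>m N) = (c1 + c2) \<cdot>\<^sub>m P"
proof -
  have "P * (c1 \<cdot>\<^sub>m P + c2 \<cdot>\<^sub>m 1\<^sub>m N) = c1 \<cdot>\<^sub>m (P * P) + c2 \<cdot>\<^sub>m P"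
    using P by (subst mult_add_distrib_mat[of _ N N]) (auto simp: mult_smult_distrib[of _ N N _ N])
  then show ?thesis
    using P idem by (simp add: add_smult_distrib_right_mat[OF P])
qed

lemma power_smult_idem_plus_smult_one:
  fixes P :: "'a::comm_ring_1 mat"
  assumes P: "P \<in> carrier_mat N N" and idem: "P * P = P"
  shows "(c1 \<cdot>\<^sub>m P + c2 \<cdot>\<^sub>m 1\<^sub>m N) ^\<^sub>m M
           = ((c1 + c2) ^ M - c2 ^ M) \<cdot>\<^sub>m P + c2 ^ M \<cdot>\<^sub>m 1\<^sub>m N"
proof (induction M)
  case 0
  show ?case using P by (intro eq_matI) auto
next
  case (Suc M)
  let ?X = "c1 \<cdot>\<^sub>m P + c2 \<cdot>\<^sub>m 1\<^sub>m N"
  have "?X ^\<^sub>m Suc M = (((c1 + c2) ^ M - c2 ^ M) \<cdot>\<^sub>m P + c2 ^ M \<cdot>\<^sub>m 1\<^sub>m N) * ?X"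
    using Suc by simp
  also have "\<dots> = ((c1 + c2) ^ M - c2 ^ M) \<cdot>\<^sub>m (P * ?X) + c2 ^ M \<cdot>\<^sub>m ?X"
    using P by (subst add_mult_distrib_mat[of _ N N]) (auto simp: mult_smult_assoc_mat[of _ N N _ N])
  also have "\<dots> = ((c1 + c2) ^ Suc M - c2 ^ Suc M) \<cdot>\<^sub>m P + c2 ^ Suc M \<cdot>\<^sub>m 1\<^sub>m N"
    using P by (simp add: idem_mult_smult_plus_smult_one[OF P idem])
      (intro eq_matI; auto simp: algebra_simps)
  finally show ?case .
qed

lemma mtrace_smult_plus_smult_one_mult:
  assumes P: "P \<in> carrier_mat N N" and B: "B \<in> carrier_mat N N"
  shows "mtrace ((c1 \<cdot>\<^sub>m P + c2 \<cdot>\<^sub>m 1\<^sub>m N) * B) = c1 * mtrace (P * B) + c2 * mtrace B"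
proof -
  have "(c1 \<cdot>\<^sub>m P + c2 \<cdot>\<^sub>m 1\<^sub>m N) * B = c1 \<cdot>\<^sub>m (P * B) + c2 \<cdot>\<^sub>m B"
    using P B by (simp add: add_mult_distrib_mat[of _ N N] mult_smult_assoc_mat[of _ N N _ N])
  then show ?thesis
    using P B by (simp add: mtrace_add[of _ N] mtrace_smult[of _ N])
qed

lemma eigenvalue_smult_idem_plus_smult_one_cases:
  fixes P :: "'a::field mat"
  assumes P: "P \<in> carrier_mat N N" and idem: "P * P = P"
    and "eigenvalue (c1 \<cdot>\<^sub>m P + c2 \<cdot>\<^sub>m 1\<^sub>m N) k"
  shows "k = c1 + c2 \<or> k = c2"
proof -
  let ?A = "c1 \<cdot>\<^sub>m P + c2 \<cdot>\<^sub>m 1\<^sub>m N"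
  obtain w where w: "w \<in> carrier_vec N" "w \<noteq> 0\<^sub>v N" and Aw: "?A *\<^sub>v w = k \<cdot>\<^sub>v w"
    using assms(3) P unfolding eigenvalue_def eigenvector_def by auto
  have A_w: "?A *\<^sub>v w = c1 \<cdot>\<^sub>v (P *\<^sub>v w) + c2 \<cdot>\<^sub>v w"
    using P w by (simp add: add_mult_distrib_mat_vec[of _ N N] smult_mult_mat_vec[of _ N N])
  have "(c1 + c2) \<cdot>\<^sub>v (P *\<^sub>v w) = ((c1 + c2) \<cdot>\<^sub>m P) *\<^sub>v w"
    using P w by (simp add: smult_mult_mat_vec[of _ N N])
  also have "\<dots> = P *\<^sub>v (?A *\<^sub>v w)"
    using P w assoc_mult_mat_vec[of P N N ?A N w]
    by (simp flip: idem_mult_smult_plus_smult_one[OF P idem])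
  also have "\<dots> = k \<cdot>\<^sub>v (P *\<^sub>v w)"
    using P w by (simp add: Aw mult_mat_vec)
  finally have PAw: "(c1 + c2) \<cdot>\<^sub>v (P *\<^sub>v w) = k \<cdot>\<^sub>v (P *\<^sub>v w)" .
  show ?thesis
  proof (cases "P *\<^sub>v w = 0\<^sub>v N")
    case True
    have "c1 \<cdot>\<^sub>v 0\<^sub>v N = 0\<^sub>v N" by (intro eq_vecI) auto
    then have "c2 \<cdot>\<^sub>v w = k \<cdot>\<^sub>v w"
      using A_w Aw w True by simp
    then show ?thesis using smult_vec_right_cancel[OF w] by simp
  next
    case False
    have "P *\<^sub>v w \<in> carrier_vec N" using P w by simp
    then show ?thesis using smult_vec_right_cancel[OF _ False PAw] by simp
  qed
qed

lemma eigenvalue_smult_idem_plus_smult_one_add: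
  fixes P :: "'a::field mat"
  assumes P: "P \<in> carrier_mat N N" and idem: "P * P = P" and nonzero: "P \<noteq> 0\<^sub>m N N"
  shows "eigenvalue (c1 \<cdot>\<^sub>m P + c2 \<cdot>\<^sub>m 1\<^sub>m N) (c1 + c2)"
proof -
  obtain i j where ij: "i < N" "j < N" and "P $$ (i, j) \<noteq> 0"
  proof -
    have "\<exists>i<N. \<exists>j<N. P $$ (i, j) \<noteq> 0"
    proof (rule ccontr)
      assume "\<not> ?thesis"
      then have "P = 0\<^sub>m N N" using P by (intro eq_matI) auto
      with nonzero show False ..
    qed
    then show ?thesis using that by blast
  qed
  \<comment> \<open>Every column of the idempotent P is fixed by P; a nonzero one is the eigenvector.\<close>
  let ?u = "col P j"
  have u: "?u \<in> carrier_vec N" using P ij by simp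
  have "?u $ i \<noteq> 0" using P ij \<open>P $$ (i, j) \<noteq> 0\<close> by (simp add: index_col)
  then have u0: "?u \<noteq> 0\<^sub>v N" using ij by (metis index_zero_vec(1))
  have "P *\<^sub>v ?u = col (P * P) j" by (rule col_mult2[OF P P ij(2), symmetric])
  then have Pu: "P *\<^sub>v ?u = ?u" using idem by simp
  have "(c1 \<cdot>\<^sub>m P + c2 \<cdot>\<^sub>m 1\<^sub>m N) *\<^sub>v ?u = (c1 + c2) \<cdot>\<^sub>v ?u"
    using P u by (simp add: add_mult_distrib_mat_vec[of _ N N] smult_mult_mat_vec[of _ N N] Pu
        add_smult_distrib_vec)
  then have "eigenvector (c1 \<cdot>\<^sub>m P + c2 \<cdot>\<^sub>m 1\<^sub>m N) ?u (c1 + c2)"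
    using P u u0 unfolding eigenvector_def by simp
  then show ?thesis unfolding eigenvalue_def by blast
qed

lemma largest_eigenvalue_smult_idem_plus_smult_one:
  fixes P :: "complex mat" and c1 c2 :: real
  assumes P: "P \<in> carrier_mat N N" and idem: "P * P = P" and nonzero: "P \<noteq> 0\<^sub>m N N"
    and "c1 > 0"
  shows "largest_eigenvalue (of_real c1 \<cdot>\<^sub>m P + of_real c2 \<cdot>\<^sub>m 1\<^sub>m N) = c1 + c2"
proof -
  let ?S = "{Re k |k. eigenvalue (of_real c1 \<cdot>\<^sub>m P + of_real c2 \<cdot>\<^sub>m 1\<^sub>m N) k}"
  have "?S \<subseteq> {c1 + c2, c2}"
    using eigenvalue_smult_idem_plus_smult_one_cases[OF P idem] by fastforce
  moreover have "c1 + c2 \<in> ?S"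
    using eigenvalue_smult_idem_plus_smult_one_add[OF P idem nonzero, of "of_real c1" "of_real c2"]
    by force
  ultimately show ?thesis
    unfolding largest_eigenvalue_def using \<open>c1 > 0\<close>
    by (intro Max_eqI) (auto intro: finite_subset)
qed

lemma hermitian_op_mtrace_mult_real:
  assumes A: "hermitian_op n A" and B: "hermitian_op n B"
  shows "Im (mtrace (A * B)) = 0"
proof -
  have carrier: "A \<in> carrier_mat (2^n) (2^n)" "B \<in> carrier_mat (2^n) (2^n)"
    using A B unfolding hermitian_op_def by blast+
  have tr: "mtrace (A * B) = (\<Sum>i<2^n. \<Sum>k<2^n. A $$ (i, k) * B $$ (k, i))"
    using carrier by (simp add: mtrace_def scalar_prod_def atLeast0LessThan)
  have "cnj (A $$ (i, k) * B $$ (k, i)) = A $$ (k, i) * B $$ (i, k)"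
    if "i < 2^n" "k < 2^n" for i k
    using A B that unfolding hermitian_op_def by (metis complex_cnj_mult)
  then have "cnj (mtrace (A * B)) = (\<Sum>i<2^n. \<Sum>k<2^n. A $$ (k, i) * B $$ (i, k))"
    unfolding tr cnj_sum by (intro sum.cong refl) simp
  also have "\<dots> = mtrace (A * B)"
    unfolding tr by (subst sum.swap) (simp add: ac_simps)
  finally show ?thesis
    by (metis cnj.sel(2) neg_equal_zero)
qed

lemma sum_mult_cnj_eq_norm_sum:
  "(\<Sum>k<N. v $ k * cnj (v $ k)) = of_real (\<Sum>k<N. cmod (v $ k) ^ 2)"
  by (simp only: of_real_sum complex_norm_square)

lemma pure_state_carrier: "pure_state n \<rho> \<Longrightarrow> \<rho> \<in> carrier_mat (2^n) (2^n)"
  by (auto simp: pure_state_def)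

lemma pure_state_mtrace: "pure_state n \<rho> \<Longrightarrow> mtrace \<rho> = 1"
  by (auto simp: pure_state_def mtrace_def sum_mult_cnj_eq_norm_sum)

lemma pure_state_idem:
  assumes "pure_state n \<rho>"
  shows "\<rho> * \<rho> = \<rho>"
proof -
  obtain v where norm: "(\<Sum>i<2^n. cmod (v $ i) ^ 2) = 1"
    and \<rho>: "\<rho> = mat (2^n) (2^n) (\<lambda>(i, j). v $ i * cnj (v $ j))"
    using assms unfolding pure_state_def by blast
  have entries: "(\<rho> * \<rho>) $$ (i, j) = \<rho> $$ (i, j)" if "i < 2^n" "j < 2^n" for i j
  proof -
    have "(\<rho> * \<rho>) $$ (i, j) = (\<Sum>k<2^n. v $ i * cnj (v $ k) * (v $ k * cnj (v $ j)))"
      using that by (simp add: \<rho> scalar_prod_def atLeast0LessThan)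
    also have "\<dots> = v $ i * cnj (v $ j) * (\<Sum>k<2^n. v $ k * cnj (v $ k))"
      by (simp add: sum_distrib_left ac_simps)
    finally show ?thesis
      using that by (simp add: \<rho> sum_mult_cnj_eq_norm_sum norm)
  qed
  moreover have "\<rho> \<in> carrier_mat (2^n) (2^n)" by (simp add: \<rho>)
  ultimately show ?thesis by (intro eq_matI) auto
qed

lemma pure_state_hermitian: "pure_state n \<rho> \<Longrightarrow> hermitian_op n \<rho>"
  by (auto simp: pure_state_def hermitian_op_def)

lemma depolarize_pure_power:
  assumes "pure_state n \<rho>"
  shows "depolarize n p \<rho> ^\<^sub>m M
           = of_real ((1 - p + p / 2^n) ^ M - (p / 2^n) ^ M) \<cdot>\<^sub>m \<rho>
             + of_real ((p / 2^n) ^ M) \<cdot>\<^sub>m 1\<^sub>m (2^n)"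
  unfolding depolarize_def
  using power_smult_idem_plus_smult_one[OF pure_state_carrier[OF assms] pure_state_idem[OF assms]]
  by simp

lemma depolarize_pure_power_mtrace_mult:
  assumes "pure_state n \<rho>" and "Ob \<in> carrier_mat (2^n) (2^n)"
  shows "Re (mtrace (depolarize n p \<rho> ^\<^sub>m M * Ob))
           = ((1 - p + p / 2^n) ^ M - (p / 2^n) ^ M) * Re (mtrace (\<rho> * Ob))
             + (p / 2^n) ^ M * Re (mtrace Ob)"
  unfolding depolarize_pure_power[OF assms(1)]
  by (simp add: mtrace_smult_plus_smult_one_mult[OF pure_state_carrier[OF assms(1)] assms(2)])

lemma depolarize_pure_power_mtrace:
  assumes "pure_state n \<rho>"
  shows "Re (mtrace (depolarize n p \<rho> ^\<^sub>m M))
           = (1 - p + p / 2^n) ^ M - (p / 2^n) ^ M + (p / 2^n) ^ M * 2^n"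
  unfolding depolarize_pure_power[OF assms] using pure_state_carrier[OF assms]
  by (simp add: mtrace_add[of _ "2^n"] mtrace_smult[of _ "2^n"] pure_state_mtrace[OF assms]
      mtrace_one)

lemma largest_eigenvalue_depolarize_pure:
  assumes "pure_state n \<rho>" and "p < 1"
  shows "largest_eigenvalue (depolarize n p \<rho>) = 1 - p + p / 2^n"
proof -
  have "\<rho> \<noteq> 0\<^sub>m (2^n) (2^n)"
    using pure_state_mtrace[OF assms(1)] by (auto simp: mtrace_def)
  moreover have "1 - p > 0" using assms(2) by simp
  ultimately show ?thesis
    unfolding depolarize_def
    by (rule largest_eigenvalue_smult_idem_plus_smult_one[OF pure_state_carrier[OF assms(1)]
          pure_state_idem[OF assms(1)]])
qed

lemma depolarize_pure_mtrace_mult: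
  assumes "pure_state n \<rho>" and "Ob \<in> carrier_mat (2^n) (2^n)"
  shows "Re (mtrace (depolarize n p \<rho> * Ob))
           = (1 - p) * Re (mtrace (\<rho> * Ob)) + p / 2^n * Re (mtrace Ob)"
  unfolding depolarize_def
  by (simp add: mtrace_smult_plus_smult_one_mult[OF pure_state_carrier[OF assms(1)] assms(2)])

lemma resolvability_affine:
  assumes "C r1 = \<alpha> * x1 + \<beta>" and "C r2 = \<alpha> * x2 + \<beta>"
    and "Re (mtrace (r1 * Ob)) = \<delta> * x1 + \<epsilon>" and "Re (mtrace (r2 * Ob)) = \<delta> * x2 + \<epsilon>"
    and "x1 \<noteq> x2" and "\<delta> \<noteq> 0"
  shows "resolvability \<gamma> C Ob r1 r2 = (\<alpha> / \<delta>)^2 / \<gamma>"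
proof -
  have "C r1 - C r2 = \<alpha> * (x1 - x2)"
    using assms(1,2) by (simp add: right_diff_distrib)
  moreover have "Re (mtrace (r1 * Ob)) - Re (mtrace (r2 * Ob)) = \<delta> * (x1 - x2)"
    using assms(3,4) by (simp add: right_diff_distrib)
  ultimately show ?thesis
    using assms(5) unfolding resolvability_def by simp
qed

lemma pure_state_Re_mtrace_mult_neq:
  assumes "pure_state n \<rho>1" and "pure_state n \<rho>2" and "hermitian_op n Ob"
    and "mtrace (\<rho>1 * Ob) \<noteq> mtrace (\<rho>2 * Ob)"
  shows "Re (mtrace (\<rho>1 * Ob)) \<noteq> Re (mtrace (\<rho>2 * Ob))"
  using assms(4) hermitian_op_mtrace_mult_real[OF pure_state_hermitian assms(3)] assms(1,2)
  by (auto simp: complex_eq_iff)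

lemma resolvability_C_B_depolarize_pure:
  assumes \<rho>1: "pure_state n \<rho>1" and \<rho>2: "pure_state n \<rho>2" and Ob: "hermitian_op n Ob"
    and neq: "mtrace (\<rho>1 * Ob) \<noteq> mtrace (\<rho>2 * Ob)" and "0 \<le> p" and "p < 1"
  shows "resolvability (1 / largest_eigenvalue (depolarize n p \<rho>1) ^ (2 * M)) (C_B M Ob) Ob
           (depolarize n p \<rho>1) (depolarize n p \<rho>2) = Gamma n M p"
proof -
  define a q where "a = 1 - p + p / 2^n" and "q = p / 2^n"
  have "a > 0" using assms(5,6) by (simp add: a_def add_pos_nonneg)
  have \<lambda>: "largest_eigenvalue (depolarize n p \<rho>) = a" if "pure_state n \<rho>" for \<rho>
    using largest_eigenvalue_depolarize_pure[OF that assms(6)] by (simp add: a_def)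
  have carrier: "Ob \<in> carrier_mat (2^n) (2^n)" using Ob by (simp add: hermitian_op_def)
  have C_B: "C_B M Ob (depolarize n p \<rho>)
      = (a^M - q^M) / a^M * Re (mtrace (\<rho> * Ob)) + q^M * Re (mtrace Ob) / a^M"
    if "pure_state n \<rho>" for \<rho>
    unfolding C_B_def \<lambda>[OF that] depolarize_pure_power_mtrace_mult[OF that carrier]
    by (simp add: a_def q_def add_divide_distrib)
  note obs = depolarize_pure_mtrace_mult[OF _ carrier, of _ p, folded q_def]
  have "resolvability (1 / largest_eigenvalue (depolarize n p \<rho>1) ^ (2 * M)) (C_B M Ob) Ob
      (depolarize n p \<rho>1) (depolarize n p \<rho>2) = ((a^M - q^M) / a^M / (1 - p))^2 / (1 / a ^ (2 * M))"
    using resolvability_affine[OF C_B[OF \<rho>1] C_B[OF \<rho>2] obs[OF \<rho>1] obs[OF \<rho>2]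
        pure_state_Re_mtrace_mult_neq[OF \<rho>1 \<rho>2 Ob neq]] assms(6)
    by (simp add: \<lambda>[OF \<rho>1])
  also have "\<dots> = (a^M - q^M)^2 / (1 - p)^2"
  proof -
    have "a ^ (2 * M) = (a^M)^2" by (metis power_mult mult.commute)
    then show ?thesis using \<open>a > 0\<close> assms(6) by (simp add: power_divide power_mult_distrib)
  qed
  also have "\<dots> = Gamma n M p" by (simp add: Gamma_def a_def q_def)
  finally show ?thesis .
qed

lemma resolvability_C_A_depolarize_pure_le:
  assumes \<rho>1: "pure_state n \<rho>1" and \<rho>2: "pure_state n \<rho>2" and Ob: "hermitian_op n Ob"
    and neq: "mtrace (\<rho>1 * Ob) \<noteq> mtrace (\<rho>2 * Ob)" and "0 \<le> p" and "p < 1"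
    and \<gamma>: "\<gamma> \<ge> 1 / (Re (mtrace (depolarize n p \<rho>1 ^\<^sub>m M))) ^ 2"
  shows "resolvability \<gamma> (C_A M Ob) Ob (depolarize n p \<rho>1) (depolarize n p \<rho>2) \<le> Gamma n M p"
proof -
  define a q where "a = 1 - p + p / 2^n" and "q = p / 2^n"
  define T where "T = a^M - q^M + q^M * 2^n"
  have "0 \<le> q" and "a > 0" using assms(5,6) by (simp_all add: a_def q_def add_pos_nonneg)
  have "q^M * 1 \<le> q^M * 2^n"
    using \<open>0 \<le> q\<close> by (intro mult_left_mono) simp_all
  moreover have "a^M > 0" using \<open>a > 0\<close> by simp
  ultimately have "T > 0" by (simp add: T_def)
  have tr: "Re (mtrace (depolarize n p \<rho> ^\<^sub>m M)) = T" if "pure_state n \<rho>" for \<rho>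
    using depolarize_pure_power_mtrace[OF that] by (simp add: T_def a_def q_def)
  have carrier: "Ob \<in> carrier_mat (2^n) (2^n)" using Ob by (simp add: hermitian_op_def)
  have C_A: "C_A M Ob (depolarize n p \<rho>)
      = (a^M - q^M) / T * Re (mtrace (\<rho> * Ob)) + q^M * Re (mtrace Ob) / T"
    if "pure_state n \<rho>" for \<rho>
    unfolding C_A_def tr[OF that] depolarize_pure_power_mtrace_mult[OF that carrier]
    by (simp add: a_def q_def add_divide_distrib)
  note obs = depolarize_pure_mtrace_mult[OF _ carrier, of _ p, folded q_def]
  have "resolvability \<gamma> (C_A M Ob) Ob (depolarize n p \<rho>1) (depolarize n p \<rho>2)
      = ((a^M - q^M) / T / (1 - p))^2 / \<gamma>"
    using resolvability_affine[OF C_A[OF \<rho>1] C_A[OF \<rho>2] obs[OF \<rho>1] obs[OF \<rho>2]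
        pure_state_Re_mtrace_mult_neq[OF \<rho>1 \<rho>2 Ob neq]] assms(6)
    by simp
  also have "\<dots> \<le> ((a^M - q^M) / T / (1 - p))^2 / (1 / T^2)"
  proof (rule divide_left_mono)
    show "1 / T^2 \<le> \<gamma>" using \<gamma> by (simp add: tr[OF \<rho>1])
    with \<open>T > 0\<close> show "0 < \<gamma> * (1 / T^2)"
      by (metis mult_pos_pos order_less_le_trans zero_less_divide_1_iff zero_less_power)
  qed simp
  also have "\<dots> = (a^M - q^M)^2 / (1 - p)^2"
    using \<open>T > 0\<close> by (simp add: power_divide power_mult_distrib)
  also have "\<dots> = Gamma n M p" by (simp add: Gamma_def a_def q_def)
  finally show ?thesis .
qed

lemma power_diff_Suc_le:
  fixes a q :: real
  assumes "0 \<le> q" and "q \<le> a" and "a + q \<le> 1" and "1 \<le> m"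
  shows "a ^ Suc m - q ^ Suc m \<le> a ^ m - q ^ m"
proof -
  obtain k where m: "m = Suc k" using \<open>1 \<le> m\<close> by (cases m) auto
  define D where "D = a ^ m - q ^ m"
  have qk: "q ^ k \<le> a ^ k" using assms(1,2) by (intro power_mono) auto
  have "D = a ^ k * (a - q) + q * (a ^ k - q ^ k)"
    by (simp add: D_def m algebra_simps)
  also have "\<dots> \<ge> q ^ k * (a - q)"
    using assms(1,2) qk by (simp add: mult_right_mono add_increasing2)
  finally have D: "q ^ k * (a - q) \<le> D" .
  have "q ^ m * (a - q) = q * (q ^ k * (a - q))" by (simp add: m)
  also have "\<dots> \<le> q * D" using D assms(1) by (rule mult_left_mono)
  also have "\<dots> \<le> (1 - a) * D"
    using D assms by (intro mult_right_mono) (auto intro: order_trans[rotated])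
  finally have "q ^ m * (a - q) \<le> (1 - a) * D" .
  moreover have "a ^ Suc m - q ^ Suc m = a * D + q ^ m * (a - q)"
    by (simp add: D_def algebra_simps)
  ultimately show ?thesis by (simp add: D_def algebra_simps)
qed

lemma power_diff_antimono:
  fixes a q :: real
  assumes "0 \<le> q" and "q \<le> a" and "a + q \<le> 1" and "1 \<le> m" and "m \<le> m'"
  shows "a ^ m' - q ^ m' \<le> a ^ m - q ^ m"
  using \<open>m \<le> m'\<close>
proof (induction m' rule: dec_induct)
  case (step k)
  then show ?case
    using power_diff_Suc_le[OF assms(1-3), of k] assms(4) by simp
qed simp

lemma Gamma_antimono:
  assumes "n \<ge> 1" and "0 \<le> p" and "p < 1" and "1 \<le> M1" and "M1 \<le> M2"
  shows "Gamma n M2 p \<le> Gamma n M1 p"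
proof -
  define a q where "a = 1 - p + p / 2^n" and "q = p / 2^n"
  have "0 \<le> q" using assms(2) by (simp add: q_def)
  moreover have "q \<le> p / 2"
    using \<open>n \<ge> 1\<close> \<open>0 \<le> p\<close> unfolding q_def
    by (intro divide_left_mono) (auto simp: self_le_power)
  moreover have "a = 1 - p + q" by (simp add: a_def q_def)
  ultimately have "q \<le> a" "a + q \<le> 1"
    using assms(3) by simp_all
  note weights = \<open>0 \<le> q\<close> this
  then have "a ^ M2 - q ^ M2 \<le> a ^ M1 - q ^ M1" and "0 \<le> a ^ M2 - q ^ M2"
    using power_diff_antimono[OF weights assms(4,5)] weights by (simp_all add: power_mono)
  then have "(a ^ M2 - q ^ M2)^2 / (1 - p)^2 \<le> (a ^ M1 - q ^ M1)^2 / (1 - p)^2"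
    by (intro divide_right_mono power_mono) simp_all
  moreover have "Gamma n M p = (a ^ M - q ^ M)^2 / (1 - p)^2" for M
    by (simp add: Gamma_def a_def q_def)
  ultimately show ?thesis by simp
qed

lemma Gamma_one: "p < 1 \<Longrightarrow> Gamma n 1 p = 1"
  by (simp add: Gamma_def)

lemma Gamma_le_one:
  assumes "n \<ge> 1" and "1 \<le> M" and "0 \<le> p" and "p < 1"
  shows "Gamma n M p \<le> 1"
  using Gamma_antimono[OF assms(1,3,4) order.refl assms(2)] Gamma_one[OF assms(4)] by simp

lemma Gamma_1_2:
  assumes "p < 1"
  shows "Gamma 1 2 p = 1"
proof -
  have "(1 - p + p / 2) ^ 2 - (p / 2) ^ 2 = 1 - p" by (simp add: power2_eq_square field_simps)
  then show ?thesis using assms by (simp add: Gamma_def)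
qed

lemma Gamma_asymp_equiv:
  assumes "0 \<le> p" and "p < 1"
  shows "(\<lambda>M. Gamma n M p) \<sim>[at_top] (\<lambda>M. 1 / (1 - p)^2 * ((1 - p + p / 2^n)^2) ^ M)"
proof -
  define a q where "a = 1 - p + p / 2^n" and "q = p / 2^n"
  have "0 \<le> q" and "q < a" using assms by (simp_all add: a_def q_def)
  then have "a > 0" by linarith
  have "(\<lambda>M. 1 - (q / a) ^ M) \<longlonglongrightarrow> 1 - 0"
    using \<open>0 \<le> q\<close> \<open>q < a\<close> by (intro tendsto_intros LIMSEQ_power_zero) simp
  moreover have "(a ^ M - q ^ M) / a ^ M = 1 - (q / a) ^ M" for M
    using \<open>a > 0\<close> by (simp add: power_divide diff_divide_distrib)
  ultimately have "(\<lambda>M. a ^ M - q ^ M) \<sim>[at_top] (\<lambda>M. a ^ M)"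
    by (intro asymp_equivI') simp
  then have "(\<lambda>M. 1 / (1 - p)^2 * (a ^ M - q ^ M)^2) \<sim>[at_top] (\<lambda>M. 1 / (1 - p)^2 * (a ^ M)^2)"
    by (intro asymp_equiv_intros)
  then show ?thesis
    by (simp add: Gamma_def a_def q_def flip: power_mult) (simp add: mult.commute)
qed

lemma Gamma_exponential_decay:
  assumes "n \<ge> 1" and "0 < p" and "p < 1"
  shows "\<exists>c r::real. c > 0 \<and> 0 < r \<and> r < 1 \<and> (\<lambda>M. Gamma n M p) \<sim>[at_top] (\<lambda>M. c * r ^ M)"
proof (rule exI[of _ "1 / (1 - p)^2"], rule exI[of _ "(1 - p + p / 2^n)^2"], intro conjI)
  show "0 < 1 / (1 - p)^2" using assms by simp
  show "(\<lambda>M. Gamma n M p) \<sim>[at_top] (\<lambda>M. 1 / (1 - p)^2 * ((1 - p + p / 2^n)^2) ^ M)"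
    using assms by (intro Gamma_asymp_equiv) simp_all
  have "0 < 1 - p + p / 2^n" using assms by (simp add: add_pos_nonneg)
  moreover have "p / 2^n < p"
    using assms by (simp add: divide_less_eq one_less_power)
  ultimately show "0 < (1 - p + p / 2^n)^2" and "(1 - p + p / 2^n)^2 < 1"
    using assms by (simp_all add: power_less_one_iff)
qed

theorem proposition3:
  fixes n M :: nat and p \<gamma>A :: real and \<rho>1 \<rho>2 Ob :: "complex mat"
  assumes "n \<ge> 1" and "M \<ge> 2" and "0 \<le> p" and "p < 1"
    and "pure_state n \<rho>1" and "pure_state n \<rho>2" and "hermitian_op n Ob"
    and "mtrace (\<rho>1 * Ob) \<noteq> mtrace (\<rho>2 * Ob)"
    and "\<gamma>A \<ge> 1 / (Re (mtrace (depolarize n p \<rho>1 ^\<^sub>m M))) ^ 2"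
  shows "resolvability \<gamma>A (C_A M Ob) Ob (depolarize n p \<rho>1) (depolarize n p \<rho>2)
           \<le> resolvability (1 / largest_eigenvalue (depolarize n p \<rho>1) ^ (2 * M)) (C_B M Ob) Ob
                (depolarize n p \<rho>1) (depolarize n p \<rho>2)
       \<and> resolvability (1 / largest_eigenvalue (depolarize n p \<rho>1) ^ (2 * M)) (C_B M Ob) Ob
                (depolarize n p \<rho>1) (depolarize n p \<rho>2) = Gamma n M p
       \<and> (\<forall>n'::nat. \<forall>M'::nat. \<forall>p'::real. n' \<ge> 1 \<longrightarrow> M' \<ge> 2 \<longrightarrow> 0 \<le> p' \<longrightarrow> p' < 1 \<longrightarrow>
            Gamma n' M' p' \<le> 1)
       \<and> (\<forall>n'::nat. \<forall>p'::real. n' \<ge> 1 \<longrightarrow> 0 \<le> p' \<longrightarrow> p' < 1 \<longrightarrow>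
            (\<forall>M1 M2::nat. 2 \<le> M1 \<longrightarrow> M1 \<le> M2 \<longrightarrow> Gamma n' M2 p' \<le> Gamma n' M1 p'))
       \<and> (\<forall>n'::nat. \<forall>p'::real. n' \<ge> 1 \<longrightarrow> 0 < p' \<longrightarrow> p' < 1 \<longrightarrow>
            (\<exists>c r::real. c > 0 \<and> 0 < r \<and> r < 1 \<and>
               (\<lambda>M'. Gamma n' M' p') \<sim>[at_top] (\<lambda>M'. c * r ^ M')))
       \<and> (\<forall>p'::real. 0 \<le> p' \<longrightarrow> p' < 1 \<longrightarrow> Gamma 1 2 p' = 1)"
proof -
  have "resolvability \<gamma>A (C_A M Ob) Ob (depolarize n p \<rho>1) (depolarize n p \<rho>2) \<le> Gamma n M p"
    by (rule resolvability_C_A_depolarize_pure_le[OF assms(5-8,3,4,9)])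
  moreover have "resolvability (1 / largest_eigenvalue (depolarize n p \<rho>1) ^ (2 * M)) (C_B M Ob) Ob
      (depolarize n p \<rho>1) (depolarize n p \<rho>2) = Gamma n M p"
    by (rule resolvability_C_B_depolarize_pure[OF assms(5-8,3,4)])
  ultimately show ?thesis
    using Gamma_le_one Gamma_antimono Gamma_exponential_decay Gamma_1_2 by auto
qed

end
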